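(* Let $X$ be a metric space with an accumulation point, and let $\rho:\mathcal{F}\to[\Psi]^\omega$ be a partition regular function. Then: (i) $\rho$ is $P^+$ if and only if $\Lambda_x(\rho)=\Gamma_x(\rho)$ for every sequence $x\in X^\Psi$; (ii) $\rho$ is $P^{\,|}$ if and only if $\Lambda_x(\rho)$ is closed for every sequence $x\in X^\Psi$; (iii) if $X$ is moreover locally compact, then $\rho$ is $P^-$ if and only if, for every sequence $x\in X^\Psi$, each isolated point of $\Gamma_x(\rho)$ belongs to $\Lambda_x(\rho)$.
   Context: Let $\Omega,\Psi$ be countably infinite sets and $\mathcal{F}\subseteq[\Omega]^\omega$ a nonempty family of infinite subsets of $\Omega$ with $A\setminus K\in\mathcal{F}$ for all $A\in\mathcal{F}$ and finite $K\subseteq\Omega$. A function $\rho:\mathcal{F}\to[\Psi]^\omega$ is partition regular if: (M) $E\subseteq F$ in $\mathcal{F}$ implies $\rho(E)\subseteq\rho(F)$; (R) for every $F\in\mathcal{F}$ and $A,B\subseteq\Psi$ with $\rho(F)=A\cup B$ there is $E\in\mathcal{F}$ with $\rho(E)\subseteq A$ or $\rho(E)\subseteq B$; (S) for every $F\in\mathcal{F}$ there is $E\subseteq F$, $E\in\mathcal{F}$, such that for every $a\in\rho(E)$ there is a finite $K\subseteq\Omega$ with $a\notin\rho(E\setminus K)$. $\mathcal{I}_\rho=\{S\subseteq\Psi:\forall F\in\mathcal{F}\ \rho(F)\not\subseteq S\}$ and $\mathcal{I}_\rho^+=\mathcal{P}(\Psi)\setminus\mathcal{I}_\rho$. For $F\in\mathcal{F}$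 and $B\subseteq\Psi$ write $\rho(F)\subseteq^\rho B$ if there is a finite $K\subseteq\Omega$ with $\rho(F\setminus K)\subseteq B$. $\rho$ is $P^+$ if for every $\subseteq$-decreasing sequence $(A_n)_{n\in\omega}$ of sets in $\mathcal{I}_\rho^+$ there is $F\in\mathcal{F}$ with $\rho(F)\subseteq^\rho A_n$ for all $n$; $P^-$ if the same holds for every such sequence with additionally $A_n\setminus A_{n+1}\in\mathcal{I}_\rho$ for all $n$; $P^{\,|}$ if the same holds for every such sequence with additionally $A_n\setminus A_{n+1}\in\mathcal{I}_\rho^+$ for all $n$. For $x:\Psi\to X$: $\Gamma_x(\rho)$ is the set of $\eta\in X$ such that for every neighborhood $U$ of $\eta$ there is $F\in\mathcal{F}$ with $\rho(F)\subseteq\{s\in\Psi:x_s\in U\}$; $\Lambda_x(\rho)$ is the set of $\eta\in X$ for which there is $F\in\mathcal{F}$ such that for every neighborhood $U$ of $\eta$ there is a finite $K\subseteq\Omega$ with $x_s\in U$ for all $s\in\rho(F\setminus K)$. *)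

theory Defs
  imports "HOL-Analysis.Analysis"
begin

definition admissible_family :: "'o set set \<Rightarrow> bool" where
  "admissible_family FF \<longleftrightarrow> FF \<noteq> {} \<and> (\<forall>A\<in>FF. infinite A) \<and>
     (\<forall>A\<in>FF. \<forall>K. finite K \<longrightarrow> A - K \<in> FF)"

definition partition_regular :: "'o set set \<Rightarrow> ('o set \<Rightarrow> 'p set) \<Rightarrow> bool" where
  "partition_regular FF \<rho> \<longleftrightarrow>
     (\<forall>F\<in>FF. infinite (\<rho> F)) \<and>
     (\<forall>E\<in>FF. \<forall>F\<in>FF. E \<subseteq> F \<longrightarrow> \<rho> E \<subseteq> \<rho> F) \<and>
     (\<forall>F\<in>FF. \<forall>A B. \<rho> F = A \<union> B \<longrightarrow> (\<exists>E\<in>FF. \<rho> E \<subseteq> A \<or> \<rho> E \<subseteq> B)) \<and>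
     (\<forall>F\<in>FF. \<exists>E\<in>FF. E \<subseteq> F \<and>
        (\<forall>a\<in>\<rho> E. \<exists>K. finite K \<and> a \<notin> \<rho> (E - K)))"

definition I_rho :: "'o set set \<Rightarrow> ('o set \<Rightarrow> 'p set) \<Rightarrow> 'p set set" where
  "I_rho FF \<rho> = {S. \<forall>F\<in>FF. \<not> \<rho> F \<subseteq> S}"

definition I_rho_plus :: "'o set set \<Rightarrow> ('o set \<Rightarrow> 'p set) \<Rightarrow> 'p set set" where
  "I_rho_plus FF \<rho> = UNIV - I_rho FF \<rho>"

definition sub_rho :: "('o set \<Rightarrow> 'p set) \<Rightarrow> 'o set \<Rightarrow> 'p set \<Rightarrow> bool" where
  "sub_rho \<rho> F B \<longleftrightarrow> (\<exists>K. finite K \<and> \<rho> (F - K) \<subseteq> B)"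

definition P_plus :: "'o set set \<Rightarrow> ('o set \<Rightarrow> 'p set) \<Rightarrow> bool" where
  "P_plus FF \<rho> \<longleftrightarrow> (\<forall>A :: nat \<Rightarrow> 'p set.
     (\<forall>n. A (Suc n) \<subseteq> A n) \<and> (\<forall>n. A n \<in> I_rho_plus FF \<rho>) \<longrightarrow>
     (\<exists>F\<in>FF. \<forall>n. sub_rho \<rho> F (A n)))"

definition P_minus :: "'o set set \<Rightarrow> ('o set \<Rightarrow> 'p set) \<Rightarrow> bool" where
  "P_minus FF \<rho> \<longleftrightarrow> (\<forall>A :: nat \<Rightarrow> 'p set.
     (\<forall>n. A (Suc n) \<subseteq> A n) \<and> (\<forall>n. A n \<in> I_rho_plus FF \<rho>) \<and>
     (\<forall>n. A n - A (Suc n) \<in> I_rho FF \<rho>) \<longrightarrow>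
     (\<exists>F\<in>FF. \<forall>n. sub_rho \<rho> F (A n)))"

definition P_bar :: "'o set set \<Rightarrow> ('o set \<Rightarrow> 'p set) \<Rightarrow> bool" where
  "P_bar FF \<rho> \<longleftrightarrow> (\<forall>A :: nat \<Rightarrow> 'p set.
     (\<forall>n. A (Suc n) \<subseteq> A n) \<and> (\<forall>n. A n \<in> I_rho_plus FF \<rho>) \<and>
     (\<forall>n. A n - A (Suc n) \<in> I_rho_plus FF \<rho>) \<longrightarrow>
     (\<exists>F\<in>FF. \<forall>n. sub_rho \<rho> F (A n)))"

definition Gamma_rho :: "'o set set \<Rightarrow> ('o set \<Rightarrow> 'p set) \<Rightarrow> ('p \<Rightarrow> 'x::topological_space) \<Rightarrow> 'x set" where
  "Gamma_rho FF \<rho> x = {\<eta>. \<forall>U. open U \<and> \<eta> \<in> U \<longrightarrow>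
      (\<exists>F\<in>FF. \<rho> F \<subseteq> {s. x s \<in> U})}"

definition Lambda_rho :: "'o set set \<Rightarrow> ('o set \<Rightarrow> 'p set) \<Rightarrow> ('p \<Rightarrow> 'x::topological_space) \<Rightarrow> 'x set" where
  "Lambda_rho FF \<rho> x = {\<eta>. \<exists>F\<in>FF. \<forall>U. open U \<and> \<eta> \<in> U \<longrightarrow>
      (\<exists>K. finite K \<and> (\<forall>s\<in>\<rho> (F - K). x s \<in> U))}"

definition isolated_point_of :: "'x::topological_space \<Rightarrow> 'x set \<Rightarrow> bool" where
  "isolated_point_of \<eta> S \<longleftrightarrow> \<eta> \<in> S \<and> (\<exists>U. open U \<and> U \<inter> S = {\<eta>})"

end

theory Submission
  imports Defs
begin

text \<open>
  Each of \<open>P\<^sup>+\<close>, \<open>P\<^sup>|\<close>, \<open>P\<^sup>-\<close> asks that certain decreasing sequences \<open>A\<close> of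
  \<open>\<rho>\<close>-positive sets have a common \<open>\<rho>\<close>-pseudointersection \<open>F\<close>.
  For the forward implications, a point \<open>\<eta>\<close> of \<open>\<Gamma>\<^sub>x(\<rho>)\<close> (a limit of points of \<open>\<Lambda>\<^sub>x(\<rho>)\<close>,
  an isolated point of \<open>\<Gamma>\<^sub>x(\<rho>)\<close>) yields such a sequence of preimages of shrinking balls
  around \<open>\<eta>\<close>, and \<open>F\<close> witnesses \<open>\<eta> \<in> \<Lambda>\<^sub>x(\<rho>)\<close>. For \<open>P\<^sup>|\<close> the radii are chosen so that
  every annulus between consecutive balls contains a point of \<open>\<Lambda>\<^sub>x(\<rho>)\<close>, which makes the
  differences positive; for \<open>P\<^sup>-\<close> the differences are preimages of compact sets missing
  \<open>\<Gamma>\<^sub>x(\<rho>)\<close>, hence small.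
  For the converses, given \<open>A\<close>, choose \<open>y\<^sub>n \<noteq> \<eta>\<close> converging to an accumulation point \<open>\<eta>\<close>
  and send \<open>s\<close> to \<open>y\<^sub>n\<close> for the first \<open>n\<close> with \<open>s \<notin> A\<^sub>n\<close> (to \<open>\<eta>\<close> if there is none).
  For this sequence, \<open>\<eta> \<in> \<Lambda>\<^sub>x(\<rho>)\<close> forces a pseudointersection of \<open>A\<close>, while \<open>\<eta> \<in> \<Gamma>\<^sub>x(\<rho>)\<close>;
  moreover each \<open>y\<^sub>n\<^sub>+\<^sub>1\<close> lies in \<open>\<Lambda>\<^sub>x(\<rho>)\<close> when the differences \<open>A\<^sub>n - A\<^sub>n\<^sub>+\<^sub>1\<close> are positive,
  and \<open>\<eta>\<close> is isolated in \<open>\<Gamma>\<^sub>x(\<rho>)\<close> when they are small.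
\<close>

lemma I_rho_plus_iff: "S \<in> I_rho_plus FF \<rho> \<longleftrightarrow> (\<exists>F\<in>FF. \<rho> F \<subseteq> S)"
  by (auto simp: I_rho_plus_def I_rho_def)

lemma I_rho_plus_mono: "S \<in> I_rho_plus FF \<rho> \<Longrightarrow> S \<subseteq> T \<Longrightarrow> T \<in> I_rho_plus FF \<rho>"
  by (auto simp: I_rho_plus_iff)

lemma I_rho_subset: "T \<in> I_rho FF \<rho> \<Longrightarrow> S \<subseteq> T \<Longrightarrow> S \<in> I_rho FF \<rho>"
  by (auto simp: I_rho_def)

lemma I_rho_empty: "partition_regular FF \<rho> \<Longrightarrow> {} \<in> I_rho FF \<rho>"
  by (auto simp: partition_regular_def I_rho_def)

lemma I_rho_Un:
  assumes "partition_regular FF \<rho>" and "S \<in> I_rho FF \<rho>" and "T \<in> I_rho FF \<rho>"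
  shows "S \<union> T \<in> I_rho FF \<rho>"
proof (rule ccontr)
  assume "S \<union> T \<notin> I_rho FF \<rho>"
  then obtain F where F: "F \<in> FF" "\<rho> F \<subseteq> S \<union> T"
    by (auto simp: I_rho_def)
  then have "\<rho> F = (\<rho> F \<inter> S) \<union> (\<rho> F \<inter> T)"
    by auto
  then obtain E where "E \<in> FF" "\<rho> E \<subseteq> S \<or> \<rho> E \<subseteq> T"
    using assms(1) F(1) unfolding partition_regular_def by (metis le_infE)
  with assms(2,3) show False
    by (auto simp: I_rho_def)
qed

lemma I_rho_UN_finite:
  assumes "partition_regular FF \<rho>" and "finite N" and "\<And>n. n \<in> N \<Longrightarrow> B n \<in> I_rho FF \<rho>"
  shows "(\<Union>n\<in>N. B n) \<in> I_rho FF \<rho>"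
  using assms(2,3)
  by (induction N rule: finite_induct) (simp_all add: I_rho_empty I_rho_Un assms(1))

lemma Gamma_rho_preimage_I_rho_plus:
  assumes "\<eta> \<in> Gamma_rho FF \<rho> x" and "open U" and "\<eta> \<in> U"
  shows "{s. x s \<in> U} \<in> I_rho_plus FF \<rho>"
  using assms by (auto simp: Gamma_rho_def I_rho_plus_iff)

lemma Lambda_rho_subset_Gamma_rho:
  assumes "admissible_family FF"
  shows "Lambda_rho FF \<rho> x \<subseteq> Gamma_rho FF \<rho> x"
proof
  fix \<eta> assume "\<eta> \<in> Lambda_rho FF \<rho> x"
  then obtain F where F: "F \<in> FF"
    and conv: "\<And>U. open U \<Longrightarrow> \<eta> \<in> U \<Longrightarrow> \<exists>K. finite K \<and> (\<forall>s\<in>\<rho> (F - K). x s \<in> U)"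
    by (auto simp: Lambda_rho_def)
  show "\<eta> \<in> Gamma_rho FF \<rho> x"
    unfolding Gamma_rho_def
  proof (intro CollectI allI impI)
    fix U assume "open U \<and> \<eta> \<in> U"
    then obtain K where "finite K" "\<forall>s\<in>\<rho> (F - K). x s \<in> U"
      using conv by blast
    moreover have "F - K \<in> FF"
      using assms F \<open>finite K\<close> by (auto simp: admissible_family_def)
    ultimately show "\<exists>F\<in>FF. \<rho> F \<subseteq> {s. x s \<in> U}"
      by blast
  qed
qed

lemma Lambda_rho_if_constant:
  assumes "F \<in> FF" and "\<And>s. s \<in> \<rho> F \<Longrightarrow> x s = p"
  shows "p \<in> Lambda_rho FF \<rho> x"
  unfolding Lambda_rho_def
proof (intro CollectI bexI[OF _ assms(1)] allI impI exI[of _ "{}"])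
  fix U assume "open U \<and> p \<in> U"
  then show "finite {} \<and> (\<forall>s\<in>\<rho> (F - {}). x s \<in> U)"
    using assms(2) by simp
qed

lemma Lambda_rho_if_sub_rho_balls:
  fixes x :: "'p \<Rightarrow> 'x::metric_space"
  assumes "F \<in> FF" and sub: "\<And>n. sub_rho \<rho> F {s. x s \<in> ball \<eta> (r n)}" and "r \<longlonglongrightarrow> 0"
  shows "\<eta> \<in> Lambda_rho FF \<rho> x"
  unfolding Lambda_rho_def
proof (intro CollectI bexI[OF _ assms(1)] allI impI)
  fix U assume "open U \<and> \<eta> \<in> U"
  then obtain e where "e > 0" "ball \<eta> e \<subseteq> U"
    by (meson open_contains_ball)
  moreover obtain n where "r n < e"
    using order_tendstoD(2)[OF \<open>r \<longlonglongrightarrow> 0\<close> \<open>e > 0\<close>] by (auto simp: eventually_sequentially)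
  moreover obtain K where "finite K" "\<rho> (F - K) \<subseteq> {s. x s \<in> ball \<eta> (r n)}"
    using sub unfolding sub_rho_def by blast
  ultimately show "\<exists>K. finite K \<and> (\<forall>s\<in>\<rho> (F - K). x s \<in> U)"
    by force
qed

lemma islimpt_annuli:
  fixes \<eta> :: "'a::metric_space"
  assumes "\<eta> islimpt S"
  obtains r p where "r \<longlonglongrightarrow> 0" and "\<And>n. p n \<in> S"
    and "\<And>n. r (Suc n) < dist \<eta> (p n)" and "\<And>n. dist \<eta> (p n) < r n"
proof -
  have "\<exists>q. \<epsilon> > 0 \<longrightarrow> q \<in> S \<and> q \<noteq> \<eta> \<and> dist \<eta> q < \<epsilon>" for \<epsilon> :: real
    using assms unfolding islimpt_approachable by (metis dist_commute)
  then obtain q where q: "\<And>\<epsilon>. \<epsilon> > 0 \<Longrightarrow> q \<epsilon> \<in> S \<and> q \<epsilon> \<noteq> \<eta> \<and> dist \<eta> (q \<epsilon>) < \<epsilon>"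
    by metis
  define r where "r = rec_nat 1 (\<lambda>_ \<epsilon>. dist \<eta> (q \<epsilon>) / 2)"
  have r_Suc: "r (Suc n) = dist \<eta> (q (r n)) / 2" for n
    by (simp add: r_def)
  have r_pos: "r n > 0" for n
  proof (induction n)
    case (Suc n)
    then have "q (r n) \<noteq> \<eta>"
      using q by blast
    then show ?case
      by (simp add: r_Suc)
  qed (simp add: r_def)
  have r_halves: "r (Suc n) < dist \<eta> (q (r n))" "dist \<eta> (q (r n)) < r n" for n
    using q[OF r_pos[of n]] r_pos[of "Suc n"] by (simp_all add: r_Suc)
  have r_le: "r n \<le> (1 / 2) ^ n" for n
  proof (induction n)
    case (Suc n)
    then show ?case
      using r_halves(2)[of n] by (simp add: r_Suc)
  qed (simp add: r_def)
  have "r \<longlonglongrightarrow> 0"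
  proof (rule tendsto_sandwich[of "\<lambda>_. 0" r _ "\<lambda>n. (1 / 2) ^ n"])
    show "\<forall>\<^sub>F n in sequentially. 0 \<le> r n"
      using r_pos by (simp add: order_less_imp_le)
    show "\<forall>\<^sub>F n in sequentially. r n \<le> (1 / 2) ^ n"
      using r_le by simp
    show "(\<lambda>n. (1 / 2 :: real) ^ n) \<longlonglongrightarrow> 0"
      by (rule LIMSEQ_power_zero) simp
  qed simp
  then show thesis
    using that[of r "\<lambda>n. q (r n)"] q r_pos r_halves by blast
qed

lemma locally_compact_space_compact_cball:
  fixes \<eta> :: "'a::metric_space"
  assumes "locally_compact_space (euclidean :: 'a topology)" and "open V" and "\<eta> \<in> V"
  obtains c where "c > 0" and "cball \<eta> c \<subseteq> V" and "compact (cball \<eta> c)"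
proof -
  obtain U K where "open U" "compact K" "\<eta> \<in> U" "U \<subseteq> K"
    using assms(1) unfolding locally_compact_space_def
    by (metis UNIV_I compactin_euclidean_iff open_openin topspace_euclidean)
  have "open (U \<inter> V)" and "\<eta> \<in> U \<inter> V"
    using \<open>open U\<close> \<open>\<eta> \<in> U\<close> assms(2,3) by auto
  then obtain c where "c > 0" and c: "cball \<eta> c \<subseteq> U \<inter> V"
    unfolding open_contains_cball by blast
  have "compact (K \<inter> cball \<eta> c)"
    using \<open>compact K\<close> by (simp add: compact_Int_closed)
  moreover have "K \<inter> cball \<eta> c = cball \<eta> c"
    using c \<open>U \<subseteq> K\<close> by blast
  ultimately show thesis
    using that \<open>c > 0\<close> c by simp
qed

definition exit_value :: "(nat \<Rightarrow> 'p set) \<Rightarrow> 'x \<Rightarrow> (nat \<Rightarrow> 'x) \<Rightarrow> 'p \<Rightarrow> 'x" where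
  "exit_value A \<eta> y s = (if \<forall>n. s \<in> A n then \<eta> else y (LEAST n. s \<notin> A n))"

lemma exit_value_cases:
  obtains "\<forall>n. s \<in> A n" and "exit_value A \<eta> y s = \<eta>"
  | "s \<notin> A 0" and "exit_value A \<eta> y s = y 0"
  | m where "s \<in> A m" and "s \<notin> A (Suc m)" and "exit_value A \<eta> y s = y (Suc m)"
proof (cases "\<forall>n. s \<in> A n")
  case True
  then show thesis
    using that(1) by (simp add: exit_value_def)
next
  case False
  define L where "L = (LEAST n. s \<notin> A n)"
  have "s \<notin> A L"
    unfolding L_def using False by (metis LeastI_ex)
  have exit_L: "exit_value A \<eta> y s = y L"
    using False unfolding exit_value_def L_def by (simp only: if_False)
  show thesis
  proof (cases L)
    case 0
    then show thesis
      using that(2) \<open>s \<notin> A L\<close> exit_L by simp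
  next
    case (Suc m)
    then have "s \<in> A m"
      using not_less_Least[of m "\<lambda>n. s \<notin> A n"] by (simp add: L_def)
    then show thesis
      using that(3) Suc \<open>s \<notin> A L\<close> exit_L by simp
  qed
qed

lemma exit_value_eq_Suc:
  assumes "decseq A" and "s \<in> A m" and "s \<notin> A (Suc m)"
  shows "exit_value A \<eta> y s = y (Suc m)"
proof (cases rule: exit_value_cases[of s A \<eta> y])
  case 2
  then show ?thesis
    using assms(2) decseqD[OF assms(1), of 0 m] by blast
next
  case (3 k)
  have "k = m"
  proof (rule ccontr)
    assume "k \<noteq> m"
    then have "Suc k \<le> m \<or> Suc m \<le> k"
      by arith
    then show False
      using 3 assms(2,3) decseqD[OF assms(1)] by blast
  qed
  with 3 show ?thesis
    by simp
qed (use assms(3) in blast)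

lemma exit_value_preimage_subset:
  assumes "decseq A" and "\<forall>k. y k \<noteq> \<eta>"
  shows "{s. exit_value A \<eta> y s \<notin> y ` {..n}} \<subseteq> A n"
proof
  fix s assume s: "s \<in> {s. exit_value A \<eta> y s \<notin> y ` {..n}}"
  show "s \<in> A n"
  proof (cases rule: exit_value_cases[of s A \<eta> y])
    case (3 m)
    then have "n \<le> m"
      using s by (auto simp: image_iff)
    with \<open>s \<in> A m\<close> show ?thesis
      using decseqD[OF assms(1)] by blast
  qed (use s in auto)
qed

lemma Gamma_rho_exit_value:
  fixes y :: "nat \<Rightarrow> 'x::topological_space"
  assumes "decseq A" and "y \<longlonglongrightarrow> \<eta>" and "\<forall>n. A n \<in> I_rho_plus FF \<rho>"
  shows "\<eta> \<in> Gamma_rho FF \<rho> (exit_value A \<eta> y)"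
  unfolding Gamma_rho_def
proof (intro CollectI allI impI)
  fix U assume U: "open U \<and> \<eta> \<in> U"
  then have "eventually (\<lambda>n. y n \<in> U) sequentially"
    using \<open>y \<longlonglongrightarrow> \<eta>\<close> topological_tendstoD by blast
  then obtain N where N: "\<And>n. n \<ge> N \<Longrightarrow> y n \<in> U"
    by (auto simp: eventually_sequentially)
  have "A N \<subseteq> {s. exit_value A \<eta> y s \<in> U}"
  proof
    fix s assume "s \<in> A N"
    then show "s \<in> {s. exit_value A \<eta> y s \<in> U}"
    proof (cases rule: exit_value_cases[of s A \<eta> y])
      case 2
      with \<open>s \<in> A N\<close> show ?thesis
        using decseqD[OF assms(1), of 0 N] by blast
    next
      case (3 m)
      have "\<not> Suc m \<le> N"
        using 3 \<open>s \<in> A N\<close> decseqD[OF assms(1), of "Suc m" N] by blast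
      with 3 N show ?thesis
        by simp
    qed (use U in simp)
  qed
  with assms(3) show "\<exists>F\<in>FF. \<rho> F \<subseteq> {s. exit_value A \<eta> y s \<in> U}"
    unfolding I_rho_plus_iff by blast
qed

lemma sub_rho_if_Lambda_rho_exit_value:
  fixes y :: "nat \<Rightarrow> 'x::t1_space"
  assumes "decseq A" and "\<forall>k. y k \<noteq> \<eta>" and "\<eta> \<in> Lambda_rho FF \<rho> (exit_value A \<eta> y)"
  shows "\<exists>F\<in>FF. \<forall>n. sub_rho \<rho> F (A n)"
proof -
  obtain F where "F \<in> FF" and conv: "\<And>U. open U \<Longrightarrow> \<eta> \<in> U \<Longrightarrow>
      \<exists>K. finite K \<and> (\<forall>s\<in>\<rho> (F - K). exit_value A \<eta> y s \<in> U)"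
    using assms(3) by (auto simp: Lambda_rho_def)
  have "sub_rho \<rho> F (A n)" for n
  proof -
    have "open (- y ` {..n})" and "\<eta> \<in> - y ` {..n}"
      using assms(2) by (auto simp: finite_imp_closed open_Compl)
    then obtain K where "finite K" "\<forall>s\<in>\<rho> (F - K). exit_value A \<eta> y s \<in> - y ` {..n}"
      using conv by blast
    then show ?thesis
      using exit_value_preimage_subset[OF assms(1,2), of n] unfolding sub_rho_def by blast
  qed
  with \<open>F \<in> FF\<close> show ?thesis
    by blast
qed

lemma sub_rho_if_Lambda_rho_exit_value_limpt:
  fixes \<eta> :: "'x::metric_space"
  assumes "decseq A" and "\<eta> islimpt UNIV"
    and Lambda: "\<And>y. y \<longlonglongrightarrow> \<eta> \<Longrightarrow> \<forall>n. y n \<noteq> \<eta> \<Longrightarrow> \<eta> \<in> Lambda_rho FF \<rho> (exit_value A \<eta> y)"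
  shows "\<exists>F\<in>FF. \<forall>n. sub_rho \<rho> F (A n)"
proof -
  obtain y where "\<forall>n. y n \<in> UNIV - {\<eta>}" "y \<longlonglongrightarrow> \<eta>"
    using \<open>\<eta> islimpt UNIV\<close> unfolding islimpt_sequential by blast
  then show ?thesis
    using sub_rho_if_Lambda_rho_exit_value[OF assms(1)] Lambda by blast
qed

lemma exit_value_preimage_subset_differences:
  assumes "\<eta> \<notin> W" and "y 0 \<notin> W" and "\<And>n. n \<ge> N \<Longrightarrow> y n \<notin> W"
  shows "{s. exit_value A \<eta> y s \<in> W} \<subseteq> (\<Union>m\<in>{..<N}. A m - A (Suc m))"
proof
  fix s assume s: "s \<in> {s. exit_value A \<eta> y s \<in> W}"
  then show "s \<in> (\<Union>m\<in>{..<N}. A m - A (Suc m))"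
  proof (cases rule: exit_value_cases[of s A \<eta> y])
    case (3 m)
    then have "\<not> N \<le> Suc m"
      using s assms(3) by auto
    with 3 show ?thesis
      by auto
  qed (use s assms(1,2) in auto)
qed

lemma Gamma_rho_exit_value_subset:
  fixes y :: "nat \<Rightarrow> 'x::metric_space"
  assumes "partition_regular FF \<rho>" and "y \<longlonglongrightarrow> \<eta>"
    and small: "\<forall>n. A n - A (Suc n) \<in> I_rho FF \<rho>"
  shows "Gamma_rho FF \<rho> (exit_value A \<eta> y) \<subseteq> {\<eta>, y 0}"
proof
  fix z assume z: "z \<in> Gamma_rho FF \<rho> (exit_value A \<eta> y)"
  show "z \<in> {\<eta>, y 0}"
  proof (rule ccontr)
    assume "z \<notin> {\<eta>, y 0}"
    define \<delta> where "\<delta> = dist z \<eta> / 2"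
    have "\<delta> > 0"
      using \<open>z \<notin> {\<eta>, y 0}\<close> by (simp add: \<delta>_def)
    with \<open>y \<longlonglongrightarrow> \<eta>\<close> have "eventually (\<lambda>n. dist (y n) \<eta> < \<delta>) sequentially"
      by (rule tendstoD)
    then obtain N where N: "\<And>n. n \<ge> N \<Longrightarrow> dist (y n) \<eta> < \<delta>"
      by (auto simp: eventually_sequentially)
    define W where "W = ball z \<delta> - {y 0}"
    have "y n \<notin> W" if "n \<ge> N" for n
      using N[OF that] dist_triangle[of z \<eta> "y n"] by (auto simp: W_def \<delta>_def)
    moreover have "\<eta> \<notin> W"
      using \<open>\<delta> > 0\<close> by (simp add: W_def \<delta>_def)
    ultimately have "{s. exit_value A \<eta> y s \<in> W} \<subseteq> (\<Union>m\<in>{..<N}. A m - A (Suc m))"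
      by (intro exit_value_preimage_subset_differences) (auto simp: W_def)
    moreover have "(\<Union>m\<in>{..<N}. A m - A (Suc m)) \<in> I_rho FF \<rho>"
      using small by (intro I_rho_UN_finite[OF assms(1)]) auto
    moreover have "open W" and "z \<in> W"
      using \<open>\<delta> > 0\<close> \<open>z \<notin> {\<eta>, y 0}\<close> by (auto simp: W_def)
    then have "{s. exit_value A \<eta> y s \<in> W} \<in> I_rho_plus FF \<rho>"
      by (rule Gamma_rho_preimage_I_rho_plus[OF z])
    ultimately show False
      using I_rho_subset unfolding I_rho_plus_def by blast
  qed
qed

lemma compact_preimage_I_rho:
  fixes x :: "'p \<Rightarrow> 'x::topological_space"
  assumes "partition_regular FF \<rho>" and "compact C" and "C \<inter> Gamma_rho FF \<rho> x = {}"
  shows "{s. x s \<in> C} \<in> I_rho FF \<rho>"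
proof -
  define \<U> where "\<U> = {U. open U \<and> {s. x s \<in> U} \<in> I_rho FF \<rho>}"
  have "C \<subseteq> \<Union>\<U>"
  proof
    fix z assume "z \<in> C"
    then have "z \<notin> Gamma_rho FF \<rho> x"
      using assms(3) by blast
    then obtain U where "open U" "z \<in> U" "\<forall>F\<in>FF. \<not> \<rho> F \<subseteq> {s. x s \<in> U}"
      unfolding Gamma_rho_def by blast
    then show "z \<in> \<Union>\<U>"
      unfolding \<U>_def I_rho_def by blast
  qed
  then obtain \<V> where "\<V> \<subseteq> \<U>" "finite \<V>" "C \<subseteq> \<Union>\<V>"
    using compactE[OF assms(2)] unfolding \<U>_def by (metis (no_types, lifting) mem_Collect_eq)
  then have "(\<Union>U\<in>\<V>. {s. x s \<in> U}) \<in> I_rho FF \<rho>"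
    by (intro I_rho_UN_finite[OF assms(1)]) (auto simp: \<U>_def)
  moreover have "{s. x s \<in> C} \<subseteq> (\<Union>U\<in>\<V>. {s. x s \<in> U})"
    using \<open>C \<subseteq> \<Union>\<V>\<close> by blast
  ultimately show ?thesis
    by (rule I_rho_subset)
qed

lemma P_plus_imp_Lambda_rho_eq_Gamma_rho:
  fixes x :: "'p \<Rightarrow> 'x::metric_space"
  assumes "admissible_family FF" and "P_plus FF \<rho>"
  shows "Lambda_rho FF \<rho> x = Gamma_rho FF \<rho> x"
proof
  show "Lambda_rho FF \<rho> x \<subseteq> Gamma_rho FF \<rho> x"
    using assms(1) by (rule Lambda_rho_subset_Gamma_rho)
  show "Gamma_rho FF \<rho> x \<subseteq> Lambda_rho FF \<rho> x"
  proof
    fix \<eta> assume \<eta>: "\<eta> \<in> Gamma_rho FF \<rho> x"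
    define r where "r n = 1 / real (Suc n)" for n
    define A where "A n = {s. x s \<in> ball \<eta> (r n)}" for n
    have "A (Suc n) \<subseteq> A n" for n
      by (auto simp: A_def r_def frac_le intro: less_le_trans)
    moreover have "A n \<in> I_rho_plus FF \<rho>" for n
      unfolding A_def by (rule Gamma_rho_preimage_I_rho_plus[OF \<eta>]) (simp_all add: r_def)
    ultimately obtain F where "F \<in> FF" "\<forall>n. sub_rho \<rho> F (A n)"
      using assms(2) unfolding P_plus_def by blast
    moreover have "r \<longlonglongrightarrow> 0"
      unfolding r_def using LIMSEQ_Suc[OF lim_const_over_n[of 1]] by simp
    ultimately show "\<eta> \<in> Lambda_rho FF \<rho> x"
      using Lambda_rho_if_sub_rho_balls unfolding A_def by metis
  qed
qed

lemma P_bar_imp_closed_Lambda_rho: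
  fixes x :: "'p \<Rightarrow> 'x::metric_space"
  assumes "admissible_family FF" and "P_bar FF \<rho>"
  shows "closed (Lambda_rho FF \<rho> x)"
  unfolding closed_limpt
proof (intro allI impI)
  fix \<eta> assume "\<eta> islimpt Lambda_rho FF \<rho> x"
  then obtain r p where "r \<longlonglongrightarrow> 0" and p: "\<And>n. p n \<in> Lambda_rho FF \<rho> x"
    and annulus: "\<And>n. r (Suc n) < dist \<eta> (p n)" "\<And>n. dist \<eta> (p n) < r n"
    using islimpt_annuli[of \<eta> "Lambda_rho FF \<rho> x"] by metis
  define A where "A n = {s. x s \<in> ball \<eta> (r n)}" for n
  have "A (Suc n) \<subseteq> A n" for n
    using annulus[of n] by (auto simp: A_def)
  moreover have diff: "A n - A (Suc n) \<in> I_rho_plus FF \<rho>" for n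
  proof -
    have "p n \<in> Gamma_rho FF \<rho> x"
      using p Lambda_rho_subset_Gamma_rho[OF assms(1)] by blast
    then have "{s. x s \<in> ball \<eta> (r n) - cball \<eta> (r (Suc n))} \<in> I_rho_plus FF \<rho>"
      using annulus[of n] by (intro Gamma_rho_preimage_I_rho_plus) (auto simp: open_Diff)
    then show ?thesis
      by (rule I_rho_plus_mono) (auto simp: A_def)
  qed
  moreover have "A n \<in> I_rho_plus FF \<rho>" for n
    using diff[of n] I_rho_plus_mono by blast
  ultimately obtain F where "F \<in> FF" "\<forall>n. sub_rho \<rho> F (A n)"
    using assms(2) unfolding P_bar_def by blast
  then show "\<eta> \<in> Lambda_rho FF \<rho> x"
    using Lambda_rho_if_sub_rho_balls \<open>r \<longlonglongrightarrow> 0\<close> unfolding A_def by metis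
qed

lemma P_minus_imp_isolated_Gamma_rho_in_Lambda_rho:
  fixes x :: "'p \<Rightarrow> 'x::metric_space"
  assumes "partition_regular FF \<rho>" and "locally_compact_space (euclidean :: 'x topology)"
    and "P_minus FF \<rho>" and "isolated_point_of \<eta> (Gamma_rho FF \<rho> x)"
  shows "\<eta> \<in> Lambda_rho FF \<rho> x"
proof -
  obtain V where \<eta>: "\<eta> \<in> Gamma_rho FF \<rho> x" and "open V" and V: "V \<inter> Gamma_rho FF \<rho> x = {\<eta>}"
    using assms(4) unfolding isolated_point_of_def by blast
  then obtain c where "c > 0" and cV: "cball \<eta> c \<subseteq> V" and "compact (cball \<eta> c)"
    using locally_compact_space_compact_cball[OF assms(2)] by blast
  define r where "r n = c / real (Suc n)" for n
  have r_pos: "r n > 0" and r_le: "r n \<le> c" for n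
    using \<open>c > 0\<close> by (simp_all add: r_def divide_le_eq)
  define A where "A n = {s. x s \<in> ball \<eta> (r n)}" for n
  have "A (Suc n) \<subseteq> A n" for n
    using \<open>c > 0\<close> by (auto simp: A_def r_def frac_le intro: less_le_trans)
  moreover have "A n \<in> I_rho_plus FF \<rho>" for n
    unfolding A_def by (rule Gamma_rho_preimage_I_rho_plus[OF \<eta>]) (simp_all add: r_pos)
  moreover have "A n - A (Suc n) \<in> I_rho FF \<rho>" for n
  proof -
    define C where "C = cball \<eta> c - ball \<eta> (r (Suc n))"
    have "compact C"
      unfolding C_def Diff_eq using \<open>compact (cball \<eta> c)\<close> by (intro compact_Int_closed) auto
    moreover have "C \<inter> Gamma_rho FF \<rho> x = {}"
    proof -
      have "C \<subseteq> V" and "\<eta> \<notin> C"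
        using cV r_pos[of "Suc n"] by (auto simp: C_def)
      with V show ?thesis
        by auto
    qed
    ultimately have "{s. x s \<in> C} \<in> I_rho FF \<rho>"
      by (rule compact_preimage_I_rho[OF assms(1)])
    then show ?thesis
      by (rule I_rho_subset) (use r_le[of n] in \<open>auto simp: A_def C_def\<close>)
  qed
  ultimately obtain F where "F \<in> FF" "\<forall>n. sub_rho \<rho> F (A n)"
    using assms(3) unfolding P_minus_def by blast
  moreover have "r \<longlonglongrightarrow> 0"
    unfolding r_def using LIMSEQ_Suc[OF lim_const_over_n[of c]] by simp
  ultimately show ?thesis
    using Lambda_rho_if_sub_rho_balls unfolding A_def by metis
qed

lemma Lambda_rho_eq_Gamma_rho_imp_P_plus:
  fixes \<eta> :: "'x::metric_space"
  assumes "\<eta> islimpt UNIV" and eq: "\<forall>x :: 'p \<Rightarrow> 'x. Lambda_rho FF \<rho> x = Gamma_rho FF \<rho> x"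
  shows "P_plus FF \<rho>"
  unfolding P_plus_def
proof (intro allI impI)
  fix A :: "nat \<Rightarrow> 'p set"
  assume "(\<forall>n. A (Suc n) \<subseteq> A n) \<and> (\<forall>n. A n \<in> I_rho_plus FF \<rho>)"
  then have "decseq A" and pos: "\<forall>n. A n \<in> I_rho_plus FF \<rho>"
    by (simp_all add: decseq_Suc_iff)
  show "\<exists>F\<in>FF. \<forall>n. sub_rho \<rho> F (A n)"
  proof (rule sub_rho_if_Lambda_rho_exit_value_limpt[OF \<open>decseq A\<close> assms(1)])
    fix y assume "y \<longlonglongrightarrow> \<eta>"
    then have "\<eta> \<in> Gamma_rho FF \<rho> (exit_value A \<eta> y)"
      using Gamma_rho_exit_value[OF \<open>decseq A\<close> _ pos] by blast
    with eq show "\<eta> \<in> Lambda_rho FF \<rho> (exit_value A \<eta> y)"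
      by simp
  qed
qed

lemma closed_Lambda_rho_imp_P_bar:
  fixes \<eta> :: "'x::metric_space"
  assumes "\<eta> islimpt UNIV" and closed: "\<forall>x :: 'p \<Rightarrow> 'x. closed (Lambda_rho FF \<rho> x)"
  shows "P_bar FF \<rho>"
  unfolding P_bar_def
proof (intro allI impI)
  fix A :: "nat \<Rightarrow> 'p set"
  assume "(\<forall>n. A (Suc n) \<subseteq> A n) \<and> (\<forall>n. A n \<in> I_rho_plus FF \<rho>)
    \<and> (\<forall>n. A n - A (Suc n) \<in> I_rho_plus FF \<rho>)"
  then have "decseq A" and diff: "\<forall>n. A n - A (Suc n) \<in> I_rho_plus FF \<rho>"
    by (simp_all add: decseq_Suc_iff)
  show "\<exists>F\<in>FF. \<forall>n. sub_rho \<rho> F (A n)"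
  proof (rule sub_rho_if_Lambda_rho_exit_value_limpt[OF \<open>decseq A\<close> assms(1)])
    fix y assume "y \<longlonglongrightarrow> \<eta>"
    have "y (Suc m) \<in> Lambda_rho FF \<rho> (exit_value A \<eta> y)" for m
    proof -
      obtain F where "F \<in> FF" and F: "\<rho> F \<subseteq> A m - A (Suc m)"
        using diff unfolding I_rho_plus_iff by blast
      show ?thesis
      proof (rule Lambda_rho_if_constant[OF \<open>F \<in> FF\<close>])
        fix s assume "s \<in> \<rho> F"
        with F show "exit_value A \<eta> y s = y (Suc m)"
          by (intro exit_value_eq_Suc[OF \<open>decseq A\<close>]) auto
      qed
    qed
    with closed show "\<eta> \<in> Lambda_rho FF \<rho> (exit_value A \<eta> y)"
      by (intro closed_sequentially[OF _ _ LIMSEQ_Suc[OF \<open>y \<longlonglongrightarrow> \<eta>\<close>]]) simp_all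
  qed
qed

lemma isolated_Gamma_rho_in_Lambda_rho_imp_P_minus:
  fixes \<eta> :: "'x::metric_space"
  assumes "partition_regular FF \<rho>" and "\<eta> islimpt UNIV"
    and iso: "\<forall>x :: 'p \<Rightarrow> 'x. \<forall>\<xi>. isolated_point_of \<xi> (Gamma_rho FF \<rho> x) \<longrightarrow> \<xi> \<in> Lambda_rho FF \<rho> x"
  shows "P_minus FF \<rho>"
  unfolding P_minus_def
proof (intro allI impI)
  fix A :: "nat \<Rightarrow> 'p set"
  assume "(\<forall>n. A (Suc n) \<subseteq> A n) \<and> (\<forall>n. A n \<in> I_rho_plus FF \<rho>)
    \<and> (\<forall>n. A n - A (Suc n) \<in> I_rho FF \<rho>)"
  then have "decseq A" and pos: "\<forall>n. A n \<in> I_rho_plus FF \<rho>"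
    and small: "\<forall>n. A n - A (Suc n) \<in> I_rho FF \<rho>"
    by (simp_all add: decseq_Suc_iff)
  show "\<exists>F\<in>FF. \<forall>n. sub_rho \<rho> F (A n)"
  proof (rule sub_rho_if_Lambda_rho_exit_value_limpt[OF \<open>decseq A\<close> assms(2)])
    fix y assume "y \<longlonglongrightarrow> \<eta>" and "\<forall>n. y n \<noteq> \<eta>"
    let ?\<Gamma> = "Gamma_rho FF \<rho> (exit_value A \<eta> y)"
    have "\<eta> \<in> ?\<Gamma>"
      using Gamma_rho_exit_value[OF \<open>decseq A\<close> \<open>y \<longlonglongrightarrow> \<eta>\<close> pos] .
    moreover have "- {y 0} \<inter> ?\<Gamma> = {\<eta>}"
      using Gamma_rho_exit_value_subset[OF assms(1) \<open>y \<longlonglongrightarrow> \<eta>\<close> small]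
        \<open>\<eta> \<in> ?\<Gamma>\<close> \<open>\<forall>n. y n \<noteq> \<eta>\<close> by auto
    ultimately have "isolated_point_of \<eta> ?\<Gamma>"
      unfolding isolated_point_of_def by (metis open_Compl closed_singleton)
    then show "\<eta> \<in> Lambda_rho FF \<rho> (exit_value A \<eta> y)"
      using iso by blast
  qed
qed

theorem proposition3p2:
  fixes FF :: "('o::countable) set set"
    and \<rho> :: "'o set \<Rightarrow> ('p::countable) set"
  assumes "infinite (UNIV :: 'o set)"
    and "infinite (UNIV :: 'p set)"
    and "admissible_family FF"
    and "partition_regular FF \<rho>"
    and "\<exists>\<eta> :: 'x::metric_space. \<eta> islimpt UNIV"
  shows "(P_plus FF \<rho> \<longleftrightarrow>
            (\<forall>x :: 'p \<Rightarrow> 'x. Lambda_rho FF \<rho> x = Gamma_rho FF \<rho> x))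
       \<and> (P_bar FF \<rho> \<longleftrightarrow>
            (\<forall>x :: 'p \<Rightarrow> 'x. closed (Lambda_rho FF \<rho> x)))
       \<and> (locally_compact_space (euclidean :: 'x topology) \<longrightarrow>
            (P_minus FF \<rho> \<longleftrightarrow>
              (\<forall>x :: 'p \<Rightarrow> 'x. \<forall>\<eta>. isolated_point_of \<eta> (Gamma_rho FF \<rho> x) \<longrightarrow>
                  \<eta> \<in> Lambda_rho FF \<rho> x)))"
proof -
  obtain \<eta> :: 'x where \<eta>: "\<eta> islimpt UNIV"
    using assms(5) by blast
  have "P_plus FF \<rho> \<longleftrightarrow> (\<forall>x :: 'p \<Rightarrow> 'x. Lambda_rho FF \<rho> x = Gamma_rho FF \<rho> x)"
    using P_plus_imp_Lambda_rho_eq_Gamma_rho[OF assms(3)] Lambda_rho_eq_Gamma_rho_imp_P_plus[OF \<eta>]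
    by blast
  moreover have "P_bar FF \<rho> \<longleftrightarrow> (\<forall>x :: 'p \<Rightarrow> 'x. closed (Lambda_rho FF \<rho> x))"
    using P_bar_imp_closed_Lambda_rho[OF assms(3)] closed_Lambda_rho_imp_P_bar[OF \<eta>]
    by blast
  moreover have "P_minus FF \<rho> \<longleftrightarrow>
      (\<forall>x :: 'p \<Rightarrow> 'x. \<forall>\<xi>. isolated_point_of \<xi> (Gamma_rho FF \<rho> x) \<longrightarrow> \<xi> \<in> Lambda_rho FF \<rho> x)"
    if "locally_compact_space (euclidean :: 'x topology)"
    using P_minus_imp_isolated_Gamma_rho_in_Lambda_rho[OF assms(4) that]
      isolated_Gamma_rho_in_Lambda_rho_imp_P_minus[OF assms(4) \<eta>]
    by blast
  ultimately show ?thesis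
    by blast
qed

end
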